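(* Let $\Theta=\{\theta_1,\dots,\theta_N\}$ be a finite set of $N\ge 1$ distinct elements, and let $PES(\Theta)=\{A_{ij} : i=0,\dots,N;\ j=1,\dots,P(N,i)\}$ be its permutation event space, where $P(N,i)=\frac{N!}{(N-i)!}$. For $i\ge 0$ let $F(i)=\sum_{k=0}^{i}P(i,k)=\sum_{k=0}^{i}\frac{i!}{(i-k)!}$, and set $S=\sum_{i=1}^{N}P(N,i)\,(F(i)-1)$. Consider the entropy $$H_{RPS}(\mathscr{M})=-\sum_{i=1}^{N}\sum_{j=1}^{P(N,i)}\mathscr{M}(A_{ij})\log\left(\frac{\mathscr{M}(A_{ij})}{F(i)-1}\right)$$ as a function on the set of all permutation mass functions $\mathscr{M}$ on $PES(\Theta)$. Then $H_{RPS}(\mathscr{M})$ attains its maximum value if and only if $$\mathscr{M}(A_{ij})=\frac{F(i)-1}{S}\quad\text{for all } i=1,\dots,N,\ j=1,\dots,P(N,i).$$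
   Context: The permutation event space $PES(\Theta)$ is the set of all ordered tuples of distinct elements of $\Theta$ (including the empty tuple $\emptyset=A_{01}$): for each $i\in\{0,\dots,N\}$, the tuples of length $i$ are enumerated as $A_{i1},\dots,A_{i,P(N,i)}$, e.g. for $\Theta=\{\theta_1,\theta_2\}$, $PES(\Theta)=\{\emptyset,(\theta_1),(\theta_2),(\theta_1,\theta_2),(\theta_2,\theta_1)\}$. A permutation mass function (PMF) is a map $\mathscr{M}:PES(\Theta)\to[0,1]$ with $\mathscr{M}(\emptyset)=0$ and $\sum_{A\in PES(\Theta)}\mathscr{M}(A)=1$. The logarithm has a fixed base $b>1$, and the convention $0\log 0=0$ is used. *)

theory Defs
  imports Complex_Main
begin

definition PES :: "'a set \<Rightarrow> 'a list set" where
  "PES \<Theta> = {xs. distinct xs \<and> set xs \<subseteq> \<Theta>}"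

definition Pnum :: "nat \<Rightarrow> nat \<Rightarrow> real" where
  "Pnum n i = fact n / fact (n - i)"

definition Fsum :: "nat \<Rightarrow> real" where
  "Fsum i = (\<Sum>k=0..i. Pnum i k)"

definition is_PMF :: "'a set \<Rightarrow> ('a list \<Rightarrow> real) \<Rightarrow> bool" where
  "is_PMF \<Theta> M \<longleftrightarrow> (\<forall>A\<in>PES \<Theta>. 0 \<le> M A \<and> M A \<le> 1) \<and> M [] = 0
     \<and> (\<Sum>A\<in>PES \<Theta>. M A) = 1"

text \<open>RPS entropy with log base b; 0 log 0 = 0 holds since log b 0 = 0 in Isabelle.\<close>
definition H_RPS :: "real \<Rightarrow> 'a set \<Rightarrow> ('a list \<Rightarrow> real) \<Rightarrow> real" where
  "H_RPS b \<Theta> M = - (\<Sum>i=1..card \<Theta>. \<Sum>A\<in>{A\<in>PES \<Theta>. length A = i}.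
       M A * log b (M A / (Fsum i - 1)))"

definition S_const :: "nat \<Rightarrow> real" where
  "S_const N = (\<Sum>i=1..N. Pnum N i * (Fsum i - 1))"

end

theory Submission
  imports Defs
begin

(* Put w(A) = F(|A|) - 1, which is positive for A nonempty. Then
   H_RPS(M) = (1 / ln b) * sum over A nonempty of M(A) ln (w(A) / M(A)), and Gibbs' inequality
   (ln x <= x - 1 applied termwise at x = w(A) / (M(A) S)) bounds this by log_b (sum of w(A)) =
   log_b S, with equality exactly when M(A) = w(A) / S. That distribution is itself a PMF, so
   log_b S is the maximum of H_RPS and the maximisers are exactly the PMFs attaining it. *)

lemma mult_ln_div_gap:
  fixes p w W :: real
  assumes "0 < p" "0 < w" "0 < W"
  shows "p * ln W + (w / W - p) - p * ln (w / p) = p * (w / (p * W) - 1 - ln (w / (p * W)))"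
  using assms by (simp add: ln_div ln_mult field_simps)

lemma mult_ln_div_le:
  fixes p w W :: real
  assumes "0 \<le> p" "0 < w" "0 < W"
  shows "p * ln (w / p) \<le> p * ln W + (w / W - p)"
proof (cases "p = 0")
  case False
  with assms have "p > 0" by simp
  have "ln (w / (p * W)) \<le> w / (p * W) - 1"
    using \<open>p > 0\<close> assms by (simp add: ln_le_minus_one)
  with \<open>p > 0\<close> have "0 \<le> p * (w / (p * W) - 1 - ln (w / (p * W)))"
    by simp
  then show ?thesis
    using mult_ln_div_gap[OF \<open>p > 0\<close> assms(2,3)] by simp
qed (use assms in simp)

lemma mult_ln_div_eq_iff:
  fixes p w W :: real
  assumes "0 \<le> p" "0 < w" "0 < W"
  shows "p * ln (w / p) = p * ln W + (w / W - p) \<longleftrightarrow> p = w / W"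
proof (cases "p = 0")
  case False
  with assms have "p > 0" by simp
  define x where "x = w / (p * W)"
  have "x > 0" using \<open>p > 0\<close> assms by (simp add: x_def)
  have "p * ln (w / p) = p * ln W + (w / W - p) \<longleftrightarrow> ln x = x - 1"
    using mult_ln_div_gap[OF \<open>p > 0\<close> assms(2,3)] \<open>p > 0\<close> by (auto simp: x_def)
  also have "\<dots> \<longleftrightarrow> x = 1"
    using \<open>x > 0\<close> ln_eq_minus_one by auto
  also have "\<dots> \<longleftrightarrow> p = w / W"
    using \<open>p > 0\<close> assms by (auto simp: x_def field_simps)
  finally show ?thesis .
qed (use assms in simp)

lemma gibbs_inequality:
  fixes p w :: "'b \<Rightarrow> real"
  assumes "finite X" "\<forall>x\<in>X. 0 \<le> p x" "sum p X = 1" "\<forall>x\<in>X. 0 < w x"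
  shows "(\<Sum>x\<in>X. p x * ln (w x / p x)) \<le> ln (sum w X)"
    and "(\<Sum>x\<in>X. p x * ln (w x / p x)) = ln (sum w X) \<longleftrightarrow> (\<forall>x\<in>X. p x = w x / sum w X)"
proof -
  define W where "W = sum w X"
  have "X \<noteq> {}" using assms(3) by auto
  then have "W > 0" using assms(1,4) by (simp add: W_def sum_pos)
  define bound where "bound x = p x * ln W + (w x / W - p x)" for x
  have "sum bound X = sum p X * ln W + (sum w X / W - sum p X)"
    by (simp add: bound_def sum.distrib sum_subtractf sum_distrib_right sum_divide_distrib)
  then have sum_bound: "sum bound X = ln W"
    using assms(3) \<open>W > 0\<close> by (simp add: W_def)
  have le_bound: "p x * ln (w x / p x) \<le> bound x" if "x \<in> X" for x
    using mult_ln_div_le that assms(2,4) \<open>W > 0\<close> by (simp add: bound_def)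
  then have "(\<Sum>x\<in>X. p x * ln (w x / p x)) \<le> sum bound X"
    by (rule sum_mono)
  with sum_bound show "(\<Sum>x\<in>X. p x * ln (w x / p x)) \<le> ln (sum w X)"
    by (simp add: W_def)
  have "(\<Sum>x\<in>X. p x * ln (w x / p x)) = sum bound X \<longleftrightarrow>
        (\<Sum>x\<in>X. bound x - p x * ln (w x / p x)) = 0"
    by (auto simp: sum_subtractf)
  also have "\<dots> \<longleftrightarrow> (\<forall>x\<in>X. p x * ln (w x / p x) = bound x)"
    using le_bound assms(1) by (subst sum_nonneg_eq_0_iff) auto
  also have "\<dots> \<longleftrightarrow> (\<forall>x\<in>X. p x = w x / W)"
    using mult_ln_div_eq_iff assms(2,4) \<open>W > 0\<close> by (simp add: bound_def)
  finally show "(\<Sum>x\<in>X. p x * ln (w x / p x)) = ln (sum w X) \<longleftrightarrow> (\<forall>x\<in>X. p x = w x / sum w X)"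
    using sum_bound by (simp add: W_def)
qed

lemma finite_PES: "finite \<Theta> \<Longrightarrow> finite (PES \<Theta>)"
  unfolding PES_def by (metis (no_types, lifting) Collect_cong finite_subset_distinct)

lemma length_le_card_if_in_PES: "finite \<Theta> \<Longrightarrow> A \<in> PES \<Theta> \<Longrightarrow> length A \<le> card \<Theta>"
  unfolding PES_def by (metis (mono_tags) card_mono distinct_card mem_Collect_eq)

lemma card_PES_length:
  assumes "finite \<Theta>" "i \<le> card \<Theta>"
  shows "real (card {A\<in>PES \<Theta>. length A = i}) = Pnum (card \<Theta>) i"
proof -
  let ?n = "card \<Theta>"
  have "{A\<in>PES \<Theta>. length A = i} = {xs. length xs = i \<and> distinct xs \<and> set xs \<subseteq> \<Theta>}"
    unfolding PES_def by auto
  then have "card {A\<in>PES \<Theta>. length A = i} = \<Prod>{?n - i + 1 .. ?n}"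
    using card_lists_distinct_length_eq[OF assms] by simp
  moreover have "(fact ?n :: nat) = fact (?n - i) * \<Prod>{?n - i + 1 .. ?n}"
    using fact_eq_fact_times[of "?n - i" ?n] by simp
  then have "(fact ?n :: real) = fact (?n - i) * real (\<Prod>{?n - i + 1 .. ?n})"
    by (metis of_nat_fact of_nat_mult)
  ultimately show ?thesis unfolding Pnum_def by simp
qed

lemma sum_PES_by_length:
  assumes "finite \<Theta>"
  shows "(\<Sum>A\<in>PES \<Theta> - {[]}. f A (length A))
       = (\<Sum>i=1..card \<Theta>. \<Sum>A\<in>{A\<in>PES \<Theta>. length A = i}. f A i)"
proof -
  let ?X = "PES \<Theta> - {[]}"
  have "finite ?X" using finite_PES[OF assms] by simp
  moreover have "length ` ?X \<subseteq> {1..card \<Theta>}"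
    using length_le_card_if_in_PES[OF assms] by (auto simp: Suc_le_eq)
  ultimately have "(\<Sum>A\<in>?X. f A (length A))
      = (\<Sum>i=1..card \<Theta>. \<Sum>A\<in>{A\<in>?X. length A = i}. f A (length A))"
    by (intro sum.group[symmetric]) auto
  also have "\<dots> = (\<Sum>i=1..card \<Theta>. \<Sum>A\<in>{A\<in>PES \<Theta>. length A = i}. f A i)"
  proof (rule sum.cong)
    fix i :: nat assume "i \<in> {1..card \<Theta>}"
    then have "{A\<in>?X. length A = i} = {A\<in>PES \<Theta>. length A = i}" by auto
    then show "(\<Sum>A\<in>{A\<in>?X. length A = i}. f A (length A))
             = (\<Sum>A\<in>{A\<in>PES \<Theta>. length A = i}. f A i)"
      by simp
  qed simp
  finally show ?thesis .
qed

lemma Fsum_gt_1: "1 \<le> i \<Longrightarrow> 1 < Fsum i"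
proof -
  assume "1 \<le> i"
  then have "(\<Sum>k\<in>{0,1}. Pnum i k) \<le> (\<Sum>k=0..i. Pnum i k)"
    by (intro sum_mono2) (auto simp: Pnum_def)
  moreover have "Pnum i 0 = 1" by (simp add: Pnum_def)
  moreover have "Pnum i 1 = i" using \<open>1 \<le> i\<close> by (simp add: Pnum_def fact_reduce[of i])
  ultimately show ?thesis using \<open>1 \<le> i\<close> unfolding Fsum_def by simp
qed

lemma Fsum_length_gt_1: "A \<noteq> [] \<Longrightarrow> 1 < Fsum (length A)"
  using Fsum_gt_1[of "length A"] by (simp add: Suc_le_eq)

lemma sum_PES_Fsum_minus_1:
  assumes "finite \<Theta>"
  shows "(\<Sum>A\<in>PES \<Theta> - {[]}. Fsum (length A) - 1) = S_const (card \<Theta>)"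
proof -
  have "(\<Sum>A\<in>PES \<Theta> - {[]}. Fsum (length A) - 1)
      = (\<Sum>i=1..card \<Theta>. \<Sum>A\<in>{A\<in>PES \<Theta>. length A = i}. Fsum i - 1)"
    using sum_PES_by_length[OF assms, of "\<lambda>_ i. Fsum i - 1"] by simp
  also have "\<dots> = (\<Sum>i=1..card \<Theta>. Pnum (card \<Theta>) i * (Fsum i - 1))"
    by (rule sum.cong) (auto simp: card_PES_length[OF assms])
  finally show ?thesis unfolding S_const_def .
qed

lemma is_PMF_iff:
  assumes "finite \<Theta>"
  shows "is_PMF \<Theta> M \<longleftrightarrow>
         M [] = 0 \<and> (\<forall>A\<in>PES \<Theta> - {[]}. 0 \<le> M A) \<and> sum M (PES \<Theta> - {[]}) = 1"
    (is "_ \<longleftrightarrow> ?rhs")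
proof
  have "[] \<in> PES \<Theta>" by (simp add: PES_def)
  then have sum_split: "sum M (PES \<Theta>) = M [] + sum M (PES \<Theta> - {[]})"
    using finite_PES[OF assms] by (simp add: sum.remove)
  show "is_PMF \<Theta> M \<Longrightarrow> ?rhs"
    using sum_split by (simp add: is_PMF_def)
  assume rhs: ?rhs
  have "M A \<le> 1" if "A \<in> PES \<Theta>" for A
  proof (cases "A = []")
    case False
    then show ?thesis
      using member_le_sum[of A "PES \<Theta> - {[]}" M] that rhs finite_PES[OF assms] by simp
  qed (use rhs in simp)
  with rhs show "is_PMF \<Theta> M"
    using sum_split by (auto simp: is_PMF_def)
qed

lemma minus_mult_log_div:
  fixes m w b :: real
  assumes "0 \<le> m" "0 < w"
  shows "- (m * log b (m / w)) = m * ln (w / m) / ln b"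
proof (cases "m = 0")
  case False
  with assms have "0 < m" by simp
  with assms show ?thesis by (simp add: log_def ln_div divide_simps algebra_simps)
qed simp

lemma H_RPS_eq_sum_ln:
  assumes "finite \<Theta>" "\<forall>A\<in>PES \<Theta>. 0 \<le> M A"
  shows "H_RPS b \<Theta> M = (\<Sum>A\<in>PES \<Theta> - {[]}. M A * ln ((Fsum (length A) - 1) / M A)) / ln b"
proof -
  have "H_RPS b \<Theta> M = (\<Sum>A\<in>PES \<Theta> - {[]}. - (M A * log b (M A / (Fsum (length A) - 1))))"
    unfolding H_RPS_def sum_negf
    using sum_PES_by_length[OF assms(1), of "\<lambda>A i. M A * log b (M A / (Fsum i - 1))"] by simp
  also have "\<dots> = (\<Sum>A\<in>PES \<Theta> - {[]}. M A * ln ((Fsum (length A) - 1) / M A) / ln b)"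
    using assms(2) Fsum_length_gt_1 by (intro sum.cong refl minus_mult_log_div) auto
  finally show ?thesis by (simp add: sum_divide_distrib)
qed

lemma H_RPS_max:
  assumes "finite \<Theta>" "b > 1" "is_PMF \<Theta> M"
  shows H_RPS_le_log_S_const: "H_RPS b \<Theta> M \<le> log b (S_const (card \<Theta>))"
    and H_RPS_eq_log_S_const_iff: "H_RPS b \<Theta> M = log b (S_const (card \<Theta>)) \<longleftrightarrow>
      (\<forall>A\<in>PES \<Theta>. A \<noteq> [] \<longrightarrow> M A = (Fsum (length A) - 1) / S_const (card \<Theta>))"
proof -
  let ?X = "PES \<Theta> - {[]}" and ?w = "\<lambda>A. Fsum (length A) - 1"
  let ?G = "\<Sum>A\<in>?X. M A * ln (?w A / M A)"
  have "finite ?X" using finite_PES[OF assms(1)] by simp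
  moreover have "\<forall>A\<in>?X. 0 \<le> M A" and "sum M ?X = 1"
    using assms(3) by (simp_all add: is_PMF_iff[OF assms(1)])
  moreover have "\<forall>A\<in>?X. 0 < ?w A"
    by (simp add: Fsum_length_gt_1)
  ultimately have "?G \<le> ln (sum ?w ?X)" "?G = ln (sum ?w ?X) \<longleftrightarrow> (\<forall>A\<in>?X. M A = ?w A / sum ?w ?X)"
    by (rule gibbs_inequality)+
  then have gibbs: "?G \<le> ln (S_const (card \<Theta>))"
    "?G = ln (S_const (card \<Theta>)) \<longleftrightarrow> (\<forall>A\<in>?X. M A = ?w A / S_const (card \<Theta>))"
    unfolding sum_PES_Fsum_minus_1[OF assms(1)] .
  have H: "H_RPS b \<Theta> M = ?G / ln b"
    using assms(3) by (simp add: H_RPS_eq_sum_ln[OF assms(1)] is_PMF_def)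
  show "H_RPS b \<Theta> M \<le> log b (S_const (card \<Theta>))"
    using gibbs(1) assms(2) by (simp add: H log_def divide_le_cancel)
  show "H_RPS b \<Theta> M = log b (S_const (card \<Theta>)) \<longleftrightarrow>
      (\<forall>A\<in>PES \<Theta>. A \<noteq> [] \<longrightarrow> M A = ?w A / S_const (card \<Theta>))"
    using gibbs(2) assms(2) by (simp add: H log_def divide_eq_eq) blast
qed

lemma is_PMF_proportional_to_Fsum:
  assumes "finite \<Theta>" "card \<Theta> \<ge> 1"
  shows "is_PMF \<Theta> (\<lambda>A. if A = [] then 0 else (Fsum (length A) - 1) / S_const (card \<Theta>))"
proof -
  let ?X = "PES \<Theta> - {[]}" and ?S = "S_const (card \<Theta>)"
  obtain \<theta> where "\<theta> \<in> \<Theta>" using assms by fastforce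
  then have "[\<theta>] \<in> ?X" by (simp add: PES_def)
  then have "0 < (\<Sum>A\<in>?X. Fsum (length A) - 1)"
    using finite_PES[OF assms(1)] by (intro sum_pos) (auto simp: Fsum_length_gt_1)
  then have "0 < ?S" by (simp only: sum_PES_Fsum_minus_1[OF assms(1)])
  have "(\<Sum>A\<in>?X. if A = [] then 0 else (Fsum (length A) - 1) / ?S)
      = (\<Sum>A\<in>?X. (Fsum (length A) - 1) / ?S)"
    by (rule sum.cong) simp_all
  also have "\<dots> = (\<Sum>A\<in>?X. Fsum (length A) - 1) / ?S"
    by (rule sum_divide_distrib[symmetric])
  also have "\<dots> = 1"
    using \<open>0 < ?S\<close> by (simp only: sum_PES_Fsum_minus_1[OF assms(1)]) simp
  finally show ?thesis
    using \<open>0 < ?S\<close> by (simp add: is_PMF_iff[OF assms(1)] less_imp_le Fsum_length_gt_1)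
qed

theorem theorem3:
  fixes \<Theta> :: "'a set" and b :: real and M :: "'a list \<Rightarrow> real"
  assumes "finite \<Theta>" and "card \<Theta> \<ge> 1" and "b > 1"
    and "is_PMF \<Theta> M"
  shows "(\<forall>M'. is_PMF \<Theta> M' \<longrightarrow> H_RPS b \<Theta> M' \<le> H_RPS b \<Theta> M) \<longleftrightarrow>
         (\<forall>A\<in>PES \<Theta>. A \<noteq> [] \<longrightarrow>
            M A = (Fsum (length A) - 1) / S_const (card \<Theta>))"
proof
  assume max: "\<forall>M'. is_PMF \<Theta> M' \<longrightarrow> H_RPS b \<Theta> M' \<le> H_RPS b \<Theta> M"
  define M\<^sub>0 :: "'a list \<Rightarrow> real"
    where "M\<^sub>0 A = (if A = [] then 0 else (Fsum (length A) - 1) / S_const (card \<Theta>))" for A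
  have "is_PMF \<Theta> M\<^sub>0"
    unfolding M\<^sub>0_def using assms(1,2) by (rule is_PMF_proportional_to_Fsum)
  moreover have "H_RPS b \<Theta> M\<^sub>0 = log b (S_const (card \<Theta>))"
    using H_RPS_eq_log_S_const_iff[OF assms(1,3) \<open>is_PMF \<Theta> M\<^sub>0\<close>] by (simp add: M\<^sub>0_def)
  ultimately have "log b (S_const (card \<Theta>)) \<le> H_RPS b \<Theta> M"
    using max by metis
  then have "H_RPS b \<Theta> M = log b (S_const (card \<Theta>))"
    using H_RPS_le_log_S_const[OF assms(1,3,4)] by simp
  then show "\<forall>A\<in>PES \<Theta>. A \<noteq> [] \<longrightarrow> M A = (Fsum (length A) - 1) / S_const (card \<Theta>)"
    using H_RPS_eq_log_S_const_iff[OF assms(1,3,4)] by simp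
next
  assume "\<forall>A\<in>PES \<Theta>. A \<noteq> [] \<longrightarrow> M A = (Fsum (length A) - 1) / S_const (card \<Theta>)"
  then have "H_RPS b \<Theta> M = log b (S_const (card \<Theta>))"
    using H_RPS_eq_log_S_const_iff[OF assms(1,3,4)] by simp
  then show "\<forall>M'. is_PMF \<Theta> M' \<longrightarrow> H_RPS b \<Theta> M' \<le> H_RPS b \<Theta> M"
    using H_RPS_le_log_S_const[OF assms(1,3)] by simp
qed

end
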